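(* For all $m,t\in\mathbb{N}$, \[ R_t(1,m) \leq \left(1-\frac{1}{2^t}\right)2^m-\frac{\sqrt{2^t-1}}{2^t}\,2^{m/2}. \]
   Context: For a $t\times n$ matrix $\mathbf{v}$ over $\mathbb{F}_2$ with rows $\overline{v}_1,\dots,\overline{v}_t$, $\mathrm{wt}^{(t)}(\mathbf{v})=\left|\bigcup_{i} \mathrm{supp}(\overline{v}_i)\right|$ and $d^{(t)}(\mathbf{u},\mathbf{v})=\mathrm{wt}^{(t)}(\mathbf{u}-\mathbf{v})$. For a linear code $C\subseteq\mathbb{F}_2^n$, $C^t$ is the set of $t\times n$ matrices all of whose rows lie in $C$, and $R_t(C)$ is the smallest integer $\rho$ such that for every $\mathbf{v}\in\mathbb{F}_2^{t\times n}$ some $\mathbf{c}\in C^t$ has $d^{(t)}(\mathbf{v},\mathbf{c})\le\rho$. $\mathrm{RM}(1,m)$ is the first-order binary Reed–Muller code of length $2^m$ (evaluations of all affine functions $\mathbb{F}_2^m\to\mathbb{F}_2$; dimension $m+1$), with $\mathrm{RM}(1,1)=\mathbb{F}_2^2$. $R_t(1,m)=R_t(\mathrm{RM}(1,m))$. *)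

theory Defs
  imports Complex_Main
begin

text \<open>Binary words of length n are modelled as maps from a finite coordinate set P
  (with card P = n) to bool (= F_2).  A t x n matrix is a map nat => P => bool,
  with rows indexed by i < t.  Subtraction in F_2 is exclusive or.\<close>

definition wt_t :: "nat \<Rightarrow> 'p set \<Rightarrow> (nat \<Rightarrow> 'p \<Rightarrow> bool) \<Rightarrow> nat" where
  "wt_t t P v = card {p \<in> P. \<exists>i<t. v i p}"

definition dist_t :: "nat \<Rightarrow> 'p set \<Rightarrow> (nat \<Rightarrow> 'p \<Rightarrow> bool) \<Rightarrow> (nat \<Rightarrow> 'p \<Rightarrow> bool) \<Rightarrow> nat" where
  "dist_t t P u v = wt_t t P (\<lambda>i p. u i p \<noteq> v i p)"

definition code_pow :: "('p \<Rightarrow> bool) set \<Rightarrow> nat \<Rightarrow> (nat \<Rightarrow> 'p \<Rightarrow> bool) set" where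
  "code_pow C t = {c. \<forall>i<t. c i \<in> C}"

definition cov_radius_t :: "nat \<Rightarrow> 'p set \<Rightarrow> ('p \<Rightarrow> bool) set \<Rightarrow> nat" where
  "cov_radius_t t P C = (LEAST \<rho>. \<forall>v. \<exists>c\<in>code_pow C t. dist_t t P v c \<le> \<rho>)"

text \<open>Coordinates of RM(1,m): points of F_2^m, as bool lists of length m.\<close>
definition RM_pts :: "nat \<Rightarrow> bool list set" where
  "RM_pts m = {xs. length xs = m}"

text \<open>Evaluations of affine functions x |-> b + sum_{i<m} a_i x_i over F_2.\<close>
definition RM1 :: "nat \<Rightarrow> (bool list \<Rightarrow> bool) set" where
  "RM1 m = {f. \<exists>(b::bool) (a::nat \<Rightarrow> bool).
     f = (\<lambda>x. odd ((if b then 1 else 0) + card {i. i < m \<and> a i \<and> x ! i}))}"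

definition R_t_RM :: "nat \<Rightarrow> nat \<Rightarrow> nat" where
  "R_t_RM t m = cov_radius_t t (RM_pts m) (RM1 m)"

end

theory Submission
  imports Defs
begin

text \<open>For a set A of coordinates and a target word f, Parseval's identity for the characters
  of F_2^m gives a linear function whose correlation with f on A is at least sqrt |A| in
  absolute value; that function or its complement is an affine function agreeing with f on at
  least (|A| + sqrt |A|)/2 points of A. Choosing the rows of the codeword matrix greedily, each
  time restricted to the coordinates where all earlier rows already agree with v, leaves after
  t rows at least (2^m + sqrt ((2^t - 1) 2^m)) / 2^t coordinates on which the whole matrix
  agrees with v; the remaining coordinates bound the distance.\<close>

definition inner_F2 :: "nat \<Rightarrow> bool list \<Rightarrow> bool list \<Rightarrow> bool" where
  "inner_F2 m a x = odd (card {i. i < m \<and> a ! i \<and> x ! i})"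

definition sign_F2 :: "bool \<Rightarrow> real" where
  "sign_F2 b = (if b then -1 else 1)"

lemma sign_F2_xor: "sign_F2 (u \<noteq> w) = sign_F2 u * sign_F2 w"
  by (simp add: sign_F2_def)

lemma sign_F2_xor_not: "sign_F2 (u = (\<not> w)) = sign_F2 u * sign_F2 w"
  by (simp add: sign_F2_def)

lemma sign_F2_square: "sign_F2 u * sign_F2 u = 1"
  by (simp add: sign_F2_def)

lemma inner_F2_Cons: "inner_F2 (Suc m) (b # a) (y # x) = ((b \<and> y) \<noteq> inner_F2 m a x)"
proof -
  have split: "{i. i < Suc m \<and> (b # a) ! i \<and> (y # x) ! i}
      = (if b \<and> y then {0} else {}) \<union> Suc ` {i. i < m \<and> a ! i \<and> x ! i}"
    by (auto simp: less_Suc_eq_0_disj)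
  show ?thesis
    unfolding inner_F2_def split by (auto simp: card_image)
qed

lemma affine_in_RM1: "(\<lambda>x. b \<noteq> inner_F2 m a x) \<in> RM1 m"
  unfolding RM1_def inner_F2_def
  by (intro CollectI exI[of _ b] exI[of _ "\<lambda>i. a ! i"]) (auto simp: fun_eq_iff)

lemma RM_pts_eq_lists: "RM_pts m = {xs. set xs \<subseteq> UNIV \<and> length xs = m}"
  by (simp add: RM_pts_def)

lemma finite_RM_pts: "finite (RM_pts m)"
  unfolding RM_pts_eq_lists by (rule finite_lists_length_eq) simp

lemma card_RM_pts: "card (RM_pts m) = 2 ^ m"
  using card_lists_length_eq[of "UNIV :: bool set" m] by (simp add: RM_pts_eq_lists)

lemma RM_pts_Suc: "RM_pts (Suc m) = Cons True ` RM_pts m \<union> Cons False ` RM_pts m"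
  by (auto simp: RM_pts_def length_Suc_conv)

lemma inner_F2_orthogonality:
  assumes "length p = m" "length q = m"
  shows "(\<Sum>a\<in>RM_pts m. sign_F2 (inner_F2 m a p) * sign_F2 (inner_F2 m a q))
       = (if p = q then 2 ^ m else 0)"
  using assms
proof (induction m arbitrary: p q)
  case 0
  then show ?case by (simp add: RM_pts_def inner_F2_def sign_F2_def)
next
  case (Suc m)
  obtain x p' where p: "p = x # p'" "length p' = m" using Suc.prems by (cases p) auto
  obtain y q' where q: "q = y # q'" "length q' = m" using Suc.prems by (cases q) auto
  let ?S = "\<Sum>a\<in>RM_pts m. sign_F2 (inner_F2 m a p') * sign_F2 (inner_F2 m a q')"
  let ?s = "\<lambda>a. sign_F2 (inner_F2 (Suc m) a p) * sign_F2 (inner_F2 (Suc m) a q)"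
  have "(\<Sum>a\<in>RM_pts (Suc m). ?s a)
      = (\<Sum>a\<in>RM_pts m. ?s (True # a)) + (\<Sum>a\<in>RM_pts m. ?s (False # a))"
    unfolding RM_pts_Suc
    by (subst sum.union_disjoint) (auto simp: finite_RM_pts sum.reindex)
  also have "\<dots> = sign_F2 x * sign_F2 y * ?S + ?S"
    by (simp add: p q inner_F2_Cons sign_F2_xor sign_F2_xor_not sum_distrib_left mult_ac)
  also have "\<dots> = (sign_F2 x * sign_F2 y + 1) * ?S"
    by (simp add: distrib_right)
  also have "\<dots> = (if p = q then 2 ^ Suc m else 0)"
    using Suc.IH[OF p(2) q(2)] by (auto simp: p q sign_F2_def)
  finally show ?case .
qed

lemma inner_F2_parseval:
  assumes "A \<subseteq> RM_pts m"
  shows "(\<Sum>a\<in>RM_pts m. (\<Sum>p\<in>A. sign_F2 (f p) * sign_F2 (inner_F2 m a p))\<^sup>2)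
       = 2 ^ m * real (card A)"
proof -
  have "finite A" using assms finite_RM_pts finite_subset by blast
  have "(\<Sum>a\<in>RM_pts m. (\<Sum>p\<in>A. sign_F2 (f p) * sign_F2 (inner_F2 m a p))\<^sup>2)
      = (\<Sum>p\<in>A. \<Sum>q\<in>A. sign_F2 (f p) * sign_F2 (f q) *
           (\<Sum>a\<in>RM_pts m. sign_F2 (inner_F2 m a p) * sign_F2 (inner_F2 m a q)))"
    by (simp add: power2_eq_square sum_product sum_distrib_left sum.swap[of _ "RM_pts m"]
        mult_ac)
  also have "\<dots> = (\<Sum>p\<in>A. \<Sum>q\<in>A. sign_F2 (f p) * sign_F2 (f q) * (if p = q then 2 ^ m else 0))"
    by (intro sum.cong refl, subst inner_F2_orthogonality) (use assms in \<open>auto simp: RM_pts_def\<close>)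
  also have "\<dots> = 2 ^ m * real (card A)"
    by (simp add: \<open>finite A\<close> sign_F2_square if_distrib cong: if_cong)
  finally show ?thesis .
qed

lemma agreement_from_correlation:
  fixes s :: real
  assumes "finite A" and "s \<le> \<bar>\<Sum>p\<in>A. sign_F2 (g p) * sign_F2 (f p)\<bar>"
  shows "\<exists>b. (card A + s) / 2 \<le> real (card {p\<in>A. (b \<noteq> g p) = f p})"
proof -
  define X where "X = card {p\<in>A. g p = f p}"
  define Y where "Y = card {p\<in>A. g p \<noteq> f p}"
  have "card A = card ({p\<in>A. g p = f p} \<union> {p\<in>A. g p \<noteq> f p})"
    by (rule arg_cong[where f = card]) auto
  also have "\<dots> = X + Y"
    unfolding X_def Y_def using \<open>finite A\<close> by (intro card_Un_disjoint) auto
  finally have card_A: "real X + real Y = card A" by simp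
  have "(\<Sum>p\<in>A. sign_F2 (g p) * sign_F2 (f p)) = (\<Sum>p\<in>A. if g p = f p then 1 else -1)"
    by (intro sum.cong refl) (simp add: sign_F2_def)
  also have "\<dots> = real X - real Y"
    unfolding X_def Y_def by (simp add: sum.If_cases \<open>finite A\<close> Int_def conj_commute)
  finally have "s \<le> \<bar>real X - real Y\<bar>"
    using assms(2) by simp
  then have "(card A + s) / 2 \<le> real X \<or> (card A + s) / 2 \<le> real Y"
    using card_A by (cases "real Y \<le> real X") (simp_all add: abs_real_def field_simps)
  then show ?thesis
  proof
    assume "(card A + s) / 2 \<le> real X"
    moreover have "{p\<in>A. (False \<noteq> g p) = f p} = {p\<in>A. g p = f p}" by auto
    ultimately show ?thesis unfolding X_def by (intro exI[of _ False]) simp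
  next
    assume "(card A + s) / 2 \<le> real Y"
    moreover have "{p\<in>A. (True \<noteq> g p) = f p} = {p\<in>A. g p \<noteq> f p}" by auto
    ultimately show ?thesis unfolding Y_def by (intro exI[of _ True]) simp
  qed
qed

lemma RM1_agreement:
  assumes "A \<subseteq> RM_pts m"
  shows "\<exists>c\<in>RM1 m. (card A + sqrt (card A)) / 2 \<le> real (card {p\<in>A. c p = f p})"
proof -
  define W where "W a = (\<Sum>p\<in>A. sign_F2 (f p) * sign_F2 (inner_F2 m a p))" for a
  have "\<exists>a\<in>RM_pts m. real (card A) \<le> (W a)\<^sup>2"
  proof (rule ccontr)
    assume "\<not> ?thesis"
    then have "(\<Sum>a\<in>RM_pts m. (W a)\<^sup>2) < (\<Sum>a\<in>RM_pts m. real (card A))"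
      using card_RM_pts[of m] by (intro sum_strict_mono finite_RM_pts) auto
    then show False
      using inner_F2_parseval[OF assms, of f] by (simp add: W_def card_RM_pts)
  qed
  then obtain a where "sqrt (card A) \<le> \<bar>W a\<bar>"
    using real_sqrt_le_mono by fastforce
  moreover have "finite A"
    using assms finite_RM_pts finite_subset by blast
  ultimately obtain b where "(card A + sqrt (card A)) / 2
      \<le> real (card {p\<in>A. (b \<noteq> inner_F2 m a p) = f p})"
    using agreement_from_correlation[of A _ "inner_F2 m a" f] by (auto simp: W_def mult.commute)
  then show ?thesis
    using affine_in_RM1[of b m a] by (intro bexI[of _ "\<lambda>x. b \<noteq> inner_F2 m a x"])
qed

text \<open>With K = 2^t, the left-hand bound on g is the agreement guaranteed after t rows; one
  more row turns K into 2K.\<close>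

lemma greedy_bound_step:
  fixes K n g G :: real
  assumes K: "K \<ge> 1" and n: "n \<ge> 0"
    and g: "g \<ge> (n + sqrt ((K - 1) * n)) / K"
    and G: "G \<ge> (g + sqrt g) / 2"
  shows "G \<ge> (n + sqrt ((2 * K - 1) * n)) / (2 * K)"
proof -
  have "n / K \<le> (n + sqrt ((K - 1) * n)) / K"
    using K n by (simp add: divide_right_mono)
  then have "n / K \<le> g"
    using g by linarith
  then have "sqrt (n / K) \<le> sqrt g" by simp
  moreover have "K * sqrt (n / K) = sqrt (K * n)"
    using K by (simp add: real_sqrt_divide real_sqrt_mult field_simps)
  ultimately have Kg: "sqrt (K * n) \<le> K * sqrt g"
    using K by (metis mult_left_mono order_trans zero_le_one)
  have "sqrt ((2 * K - 1) * n) \<le> sqrt ((K - 1) * n) + sqrt (K * n)"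
  proof -
    have "(sqrt ((K - 1) * n))\<^sup>2 = (K - 1) * n" and "(sqrt (K * n))\<^sup>2 = K * n"
      using K n by simp_all
    then have "(2 * K - 1) * n = (sqrt ((K - 1) * n))\<^sup>2 + (sqrt (K * n))\<^sup>2"
      by (simp add: algebra_simps)
    also have "\<dots> \<le> (sqrt ((K - 1) * n) + sqrt (K * n))\<^sup>2"
      using K n by (simp add: power2_sum)
    finally show ?thesis using K n by (simp add: real_le_lsqrt)
  qed
  then have "(n + sqrt ((2 * K - 1) * n)) / (2 * K) \<le> (n + sqrt ((K - 1) * n) + K * sqrt g) / (2 * K)"
    using Kg K by (simp add: divide_right_mono)
  also have "\<dots> = ((n + sqrt ((K - 1) * n)) / K + sqrt g) / 2"
    using K by (simp add: field_simps)
  also have "\<dots> \<le> (g + sqrt g) / 2"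
    using g by (intro divide_right_mono add_right_mono) auto
  also have "\<dots> \<le> G"
    using G .
  finally show ?thesis .
qed

lemma greedy_agreement:
  assumes agree: "\<And>A f. A \<subseteq> P \<Longrightarrow>
    \<exists>c\<in>C. (card A + sqrt (card A)) / 2 \<le> real (card {p\<in>A. c p = f p})"
  shows "\<exists>c\<in>code_pow C t. (card P + sqrt ((2 ^ t - 1) * real (card P))) / 2 ^ t
           \<le> real (card {p\<in>P. \<forall>i<t. c i p = v i p})"
proof (induction t)
  case 0
  have "v \<in> code_pow C 0" by (simp add: code_pow_def)
  then show ?case by fastforce
next
  case (Suc t)
  then obtain c where c: "c \<in> code_pow C t"
    and bound: "(card P + sqrt ((2 ^ t - 1) * real (card P))) / 2 ^ t
                  \<le> real (card {p\<in>P. \<forall>i<t. c i p = v i p})"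
    by blast
  define A where "A = {p\<in>P. \<forall>i<t. c i p = v i p}"
  obtain d where "d \<in> C" and d: "(card A + sqrt (card A)) / 2 \<le> real (card {p\<in>A. d p = v t p})"
    using agree[of A "v t"] by (auto simp: A_def)
  have agreeing: "{p\<in>P. \<forall>i<Suc t. (c(t := d)) i p = v i p} = {p\<in>A. d p = v t p}"
    by (auto simp: A_def less_Suc_eq)
  have "c(t := d) \<in> code_pow C (Suc t)"
    using c \<open>d \<in> C\<close> by (auto simp: code_pow_def less_Suc_eq)
  moreover have "(card P + sqrt ((2 ^ Suc t - 1) * real (card P))) / 2 ^ Suc t
                   \<le> real (card {p\<in>A. d p = v t p})"
    using greedy_bound_step[OF _ _ bound[folded A_def] d] by simp
  ultimately show ?case
    unfolding agreeing[symmetric] by blast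
qed

lemma dist_t_eq_card_diff:
  assumes "finite P"
  shows "dist_t t P v c = card P - card {p\<in>P. \<forall>i<t. c i p = v i p}"
proof -
  have "{p\<in>P. \<exists>i<t. v i p \<noteq> c i p} = P - {p\<in>P. \<forall>i<t. c i p = v i p}"
    by auto
  then show ?thesis
    unfolding dist_t_def wt_t_def using assms by (simp add: card_Diff_subset)
qed

lemma cov_radius_t_le:
  assumes "\<And>v. \<exists>c\<in>code_pow C t. real (dist_t t P v c) \<le> B"
  shows "real (cov_radius_t t P C) \<le> B"
proof -
  have "0 \<le> B"
    using assms[of "\<lambda>_ _. False"] by (meson of_nat_0_le_iff order_trans)
  have "\<forall>v. \<exists>c\<in>code_pow C t. dist_t t P v c \<le> nat \<lfloor>B\<rfloor>"
    using assms by (meson le_nat_floor)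
  then have "cov_radius_t t P C \<le> nat \<lfloor>B\<rfloor>"
    unfolding cov_radius_t_def by (rule Least_le)
  then show ?thesis
    using \<open>0 \<le> B\<close> by linarith
qed

lemma cov_radius_t_greedy_bound:
  assumes "finite P"
    and agree: "\<And>A f. A \<subseteq> P \<Longrightarrow>
      \<exists>c\<in>C. (card A + sqrt (card A)) / 2 \<le> real (card {p\<in>A. c p = f p})"
  shows "real (cov_radius_t t P C) \<le> card P - (card P + sqrt ((2 ^ t - 1) * real (card P))) / 2 ^ t"
proof (rule cov_radius_t_le)
  fix v
  obtain c where c: "c \<in> code_pow C t"
    and bound: "(card P + sqrt ((2 ^ t - 1) * real (card P))) / 2 ^ t
                  \<le> real (card {p\<in>P. \<forall>i<t. c i p = v i p})"
    using greedy_agreement[OF agree] by blast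
  have "card {p\<in>P. \<forall>i<t. c i p = v i p} \<le> card P"
    using assms(1) by (intro card_mono) auto
  then have "real (dist_t t P v c) = card P - real (card {p\<in>P. \<forall>i<t. c i p = v i p})"
    by (simp add: dist_t_eq_card_diff[OF assms(1)] of_nat_diff)
  then show "\<exists>c\<in>code_pow C t. real (dist_t t P v c)
               \<le> card P - (card P + sqrt ((2 ^ t - 1) * real (card P))) / 2 ^ t"
    using c bound by (intro bexI[of _ c]) linarith+
qed

theorem lemma10:
  fixes m t :: nat
  shows "real (R_t_RM t m) \<le> (1 - 1 / 2 ^ t) * 2 ^ m
            - sqrt (2 ^ t - 1) / 2 ^ t * 2 powr (real m / 2)"
proof -
  have "real (R_t_RM t m) \<le> card (RM_pts m)
      - (card (RM_pts m) + sqrt ((2 ^ t - 1) * real (card (RM_pts m)))) / 2 ^ t"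
    unfolding R_t_RM_def by (rule cov_radius_t_greedy_bound[OF finite_RM_pts RM1_agreement])
  also have "\<dots> = 2 ^ m - (2 ^ m + sqrt ((2 ^ t - 1) * 2 ^ m)) / 2 ^ t"
    by (simp add: card_RM_pts)
  also have "sqrt ((2 ^ t - 1) * 2 ^ m) = sqrt (2 ^ t - 1) * 2 powr (real m / 2)"
    by (simp add: real_sqrt_mult powr_half_sqrt_powr powr_realpow)
  also have "2 ^ m - (2 ^ m + sqrt (2 ^ t - 1) * 2 powr (real m / 2)) / 2 ^ t
      = (1 - 1 / 2 ^ t) * 2 ^ m - sqrt (2 ^ t - 1) / 2 ^ t * 2 powr (real m / 2)"
    by (simp add: add_divide_distrib algebra_simps)
  finally show ?thesis .
qed

end
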